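(* Let $f \in \mathrm{Inj}(\Omega)$ and $h \in \mathrm{Fin}(\Omega)$. Then $(f)\mathrm{C}_{\mathrm{open}} = (hf)\mathrm{C}_{\mathrm{open}}$ and $(f)\mathrm{C}_{\mathrm{open}} = (fh)\mathrm{C}_{\mathrm{open}}$.
   Context: $\Omega$ is a countably infinite set; maps are written on the right and composed left to right ($(\alpha)fg=((\alpha)f)g$). $\mathrm{Inj}(\Omega)$ is the monoid of injective maps $\Omega\to\Omega$; $\mathrm{Fin}(\Omega)$ the group of permutations of $\Omega$ moving only finitely many points. For $f\in\mathrm{Inj}(\Omega)$, a cycle of $f$ is a nonempty $\Sigma\subseteq\Omega$ such that (a) for all $\alpha\in\Omega$, $(\alpha)f\in\Sigma$ iff $\alpha\in\Sigma$, and (b) no proper nonempty subset of $\Sigma$ satisfies (a). A forward cycle is an infinite cycle $\Sigma$ with $\Sigma\setminus(\Omega)f\ne\emptyset$; an open cycle is an infinite cycle that is not forward. $(f)\mathrm{C}_{\mathrm{open}}$ is the number of open cycles of $f$. *)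

theory Defs
  imports Main "HOL-Library.Countable" "HOL-Library.Extended_Nat"
begin

text \<open>Maps are written on the right in the paper; in Isabelle a map is an ordinary
function, and the paper's product hf (first h, then f) is the composition f \<circ> h.\<close>

definition is_cycle :: "('a \<Rightarrow> 'a) \<Rightarrow> 'a set \<Rightarrow> bool" where
  "is_cycle f S \<longleftrightarrow> S \<noteq> {} \<and> (\<forall>x. f x \<in> S \<longleftrightarrow> x \<in> S) \<and>
     \<not> (\<exists>T. T \<noteq> {} \<and> T \<subset> S \<and> (\<forall>x. f x \<in> T \<longleftrightarrow> x \<in> T))"

definition is_forward_cycle :: "('a \<Rightarrow> 'a) \<Rightarrow> 'a set \<Rightarrow> bool" where
  "is_forward_cycle f S \<longleftrightarrow> is_cycle f S \<and> infinite S \<and> S - range f \<noteq> {}"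

definition is_open_cycle :: "('a \<Rightarrow> 'a) \<Rightarrow> 'a set \<Rightarrow> bool" where
  "is_open_cycle f S \<longleftrightarrow> is_cycle f S \<and> infinite S \<and> \<not> is_forward_cycle f S"

text \<open>Number of open cycles, as an element of enat (there are at most countably many,
since cycles are pairwise disjoint subsets of a countable set).\<close>
definition C_open :: "('a \<Rightarrow> 'a) \<Rightarrow> enat" where
  "C_open f = (if finite {S. is_open_cycle f S} then enat (card {S. is_open_cycle f S}) else \<infinity>)"

definition finitary_perm :: "('a \<Rightarrow> 'a) \<Rightarrow> bool" where
  "finitary_perm h \<longleftrightarrow> bij h \<and> finite {x. h x \<noteq> x}"

end

theory Submission
  imports Defs
begin

(* The cycles of a map f are exactly its orbits "cycle_of f x", the classes of
   the relation "some forward iterate of x meets some forward iterate of y".  For injective f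
   an infinite cycle is open iff it lies in the range of f, and this is the case iff it is
   spanned by an injective backward chain x = s 0, s 1, s 2, ... with f (s (k+1)) = s k.

   Now let f, g be injective and agree outside a finite set.  An injective backward chain of
   f eventually avoids that set, so a tail of it is a backward chain of g as well and spans an
   open cycle of g.  Sending an open cycle of f to the open cycle of g obtained this way is
   injective, because two injective backward chains of g in the same cycle meet, so their
   f-cycles coincide.  By symmetry f and g have equally many open cycles (C_open_eq).  The
   theorem follows since f, f \<circ> h and h \<circ> f are injective and pairwise agree outside a
   finite set when h is a finitary permutation. *)

section \<open>Cycles are orbits\<close>

definition cycle_of :: "('a \<Rightarrow> 'a) \<Rightarrow> 'a \<Rightarrow> 'a set" where
  "cycle_of f x = {y. \<exists>m n. (f^^m) x = (f^^n) y}"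

lemma invariant_funpow:
  assumes "\<forall>z. f z \<in> T \<longleftrightarrow> z \<in> T"
  shows "(f^^n) z \<in> T \<longleftrightarrow> z \<in> T"
  using assms by (induction n) auto

lemma cycle_of_self: "x \<in> cycle_of f x"
  unfolding cycle_of_def by (blast intro: exI[of _ 0])

lemma cycle_of_sym: "y \<in> cycle_of f x \<Longrightarrow> x \<in> cycle_of f y"
  unfolding cycle_of_def by (blast intro: sym)

lemma cycle_of_invariant: "\<forall>y. f y \<in> cycle_of f x \<longleftrightarrow> y \<in> cycle_of f x"
proof (intro allI iffI)
  fix y
  assume "f y \<in> cycle_of f x"
  then obtain m n where "(f^^m) x = (f^^n) (f y)" unfolding cycle_of_def by blast
  then have "(f^^m) x = (f^^Suc n) y" by (simp only: funpow_Suc_right comp_apply)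
  then show "y \<in> cycle_of f x" unfolding cycle_of_def by blast
next
  fix y
  assume "y \<in> cycle_of f x"
  then obtain m n where "(f^^m) x = (f^^n) y" unfolding cycle_of_def by blast
  then have "(f^^Suc m) x = (f^^n) (f y)" by (simp add: funpow_swap1[symmetric])
  then show "f y \<in> cycle_of f x" unfolding cycle_of_def by blast
qed

lemma cycle_of_least:
  assumes inv: "\<forall>z. f z \<in> T \<longleftrightarrow> z \<in> T" and "x \<in> T"
  shows "cycle_of f x \<subseteq> T"
proof
  fix y
  assume "y \<in> cycle_of f x"
  then obtain m n where meet: "(f^^m) x = (f^^n) y" unfolding cycle_of_def by blast
  have "(f^^m) x \<in> T" using invariant_funpow[OF inv] \<open>x \<in> T\<close> by blast
  then have "(f^^n) y \<in> T" by (simp only: meet)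
  then show "y \<in> T" using invariant_funpow[OF inv] by blast
qed

lemma is_cycle_cycle_of: "is_cycle f (cycle_of f x)"
  unfolding is_cycle_def
proof (intro conjI notI)
  show "cycle_of f x = {} \<Longrightarrow> False" using cycle_of_self[of x f] by auto
  show "\<forall>z. f z \<in> cycle_of f x \<longleftrightarrow> z \<in> cycle_of f x" by (rule cycle_of_invariant)
next
  assume "\<exists>T. T \<noteq> {} \<and> T \<subset> cycle_of f x \<and> (\<forall>z. f z \<in> T \<longleftrightarrow> z \<in> T)"
  then obtain T y where T: "y \<in> T" "T \<subset> cycle_of f x" "\<forall>z. f z \<in> T \<longleftrightarrow> z \<in> T"
    by blast
  have "y \<in> cycle_of f x" using T(1,2) by (rule psubsetD[rotated])
  then have "x \<in> cycle_of f y" by (rule cycle_of_sym)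
  then have "x \<in> T" using cycle_of_least[OF T(3,1)] by (rule subsetD[rotated])
  then have "cycle_of f x \<subseteq> T" by (rule cycle_of_least[OF T(3)])
  then show False using T(2) by (simp add: psubset_eq)
qed

lemma cycle_eq_cycle_of:
  assumes "is_cycle f S" "x \<in> S"
  shows "S = cycle_of f x"
proof -
  have "\<forall>z. f z \<in> S \<longleftrightarrow> z \<in> S" using assms(1) by (simp add: is_cycle_def)
  then have "cycle_of f x \<subseteq> S" using assms(2) by (rule cycle_of_least)
  moreover have "\<not> cycle_of f x \<subset> S"
    using assms(1) cycle_of_self[of x f] cycle_of_invariant[of f x]
    unfolding is_cycle_def by blast
  ultimately show ?thesis by blast
qed

lemma cycle_of_eq: "y \<in> cycle_of f x \<Longrightarrow> cycle_of f y = cycle_of f x"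
  by (rule sym, rule cycle_eq_cycle_of[OF is_cycle_cycle_of])

lemma open_cycle_iff: "is_open_cycle f S \<longleftrightarrow> is_cycle f S \<and> infinite S \<and> S \<subseteq> range f"
  unfolding is_open_cycle_def is_forward_cycle_def by blast

lemma periodic_cycle_finite:
  assumes "inj f" "(f^^p) x = x" "p > 0"
  shows "finite (cycle_of f x)"
proof -
  define P where "P = (\<lambda>k. (f^^k) x) ` {..<p}"
  have iterate_in_P: "(f^^k) x \<in> P" for k
    using funpow_mod_eq[where f=f and n=p and x=x and m=k] assms(2,3) unfolding P_def
    by (metis lessThan_iff mod_less_divisor image_eqI)
  have "\<forall>z. f z \<in> P \<longleftrightarrow> z \<in> P"
  proof (intro allI iffI)
    fix z
    assume "f z \<in> P"
    then obtain k where "f z = (f^^k) x" unfolding P_def by blast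
    also have "\<dots> = (f^^(k + p)) x"
      using funpow_mod_eq[where f=f and n=p and x=x] assms(2) by (metis mod_add_self2)
    also have "\<dots> = f ((f^^(k + p - 1)) x)"
      using assms(3) by (metis Suc_diff_1 add_gr_0 funpow.simps(2) o_apply)
    finally have "z = (f^^(k + p - 1)) x" using injD[OF assms(1)] by blast
    then show "z \<in> P" using iterate_in_P by simp
  next
    fix z
    assume "z \<in> P"
    then obtain k where "z = (f^^k) x" unfolding P_def by blast
    then have "f z = (f^^Suc k) x" by simp
    then show "f z \<in> P" using iterate_in_P by metis
  qed
  then have "cycle_of f x \<subseteq> P" using cycle_of_least iterate_in_P[of 0] by simp
  then show ?thesis unfolding P_def using finite_subset by blast
qed

section \<open>Open cycles and backward chains\<close>

definition backward_chain :: "('a \<Rightarrow> 'a) \<Rightarrow> (nat \<Rightarrow> 'a) \<Rightarrow> bool" where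
  "backward_chain f s \<longleftrightarrow> (\<forall>k. f (s (Suc k)) = s k)"

lemma backward_chain_funpow: "backward_chain f s \<Longrightarrow> (f^^a) (s (a + b)) = s b"
  by (induction a) (simp_all add: backward_chain_def funpow_swap1)

lemma backward_chain_in_cycle: "backward_chain f s \<Longrightarrow> s k \<in> cycle_of f (s 0)"
  using backward_chain_funpow[of f s k 0] unfolding cycle_of_def
  by (metis (mono_tags) add_0_right funpow_0 mem_Collect_eq)

text \<open>Every point of an open cycle of an injective map starts an injective backward chain,
  obtained by iterating the inverse of f; injectivity holds because a repetition would make
  a point periodic and hence the cycle finite.\<close>
lemma open_cycle_backward_chain:
  assumes "inj f" "is_open_cycle f S" "x \<in> S"
  obtains s where "backward_chain f s" "s 0 = x" "inj s"
proof -
  have cyc: "is_cycle f S" and inf: "infinite S" and rng: "S \<subseteq> range f"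
    using assms(2) unfolding open_cycle_iff by auto
  have inv: "\<forall>z. f z \<in> S \<longleftrightarrow> z \<in> S" using cyc by (simp add: is_cycle_def)
  define s where "s k = (inv f ^^ k) x" for k
  have step: "s k \<in> S \<and> f (s (Suc k)) = s k" for k
  proof (induction k)
    case 0
    then show ?case using assms(3) rng f_inv_into_f[of x f UNIV] by (auto simp: s_def)
  next
    case (Suc k)
    then have "s (Suc k) \<in> S" using inv by metis
    then show ?case using rng f_inv_into_f[of "s (Suc k)" f UNIV] by (auto simp: s_def)
  qed
  then have chain: "backward_chain f s" by (simp add: backward_chain_def)
  have "s i \<noteq> s j" if "i < j" for i j
  proof
    assume rep: "s i = s j"
    have "(f^^(j - i)) (s j) = s j"
      using backward_chain_funpow[OF chain, of "j - i" i] rep \<open>i < j\<close> by simp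
    then have "finite (cycle_of f (s j))" using periodic_cycle_finite assms(1) \<open>i < j\<close> by force
    then show False using inf cycle_eq_cycle_of[OF cyc] step by metis
  qed
  then have "inj s" by (rule linorder_injI)
  then show thesis using that chain by (simp add: s_def)
qed

text \<open>Conversely an injective backward chain of an injective map spans an open cycle:
  it is infinite, and every point y of it is in the range since y can be pulled back along
  the chain.\<close>
lemma backward_chain_open_cycle:
  assumes "inj g" "backward_chain g s" "inj s"
  shows "is_open_cycle g (cycle_of g (s 0))"
  unfolding open_cycle_iff
proof (intro conjI)
  show "is_cycle g (cycle_of g (s 0))" by (rule is_cycle_cycle_of)
  have "range s \<subseteq> cycle_of g (s 0)" using backward_chain_in_cycle[OF assms(2)] by blast
  then show "infinite (cycle_of g (s 0))"
    using range_inj_infinite[OF assms(3)] finite_subset by blast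
  show "cycle_of g (s 0) \<subseteq> range g"
  proof
    fix y
    assume "y \<in> cycle_of g (s 0)"
    then obtain m n where meet: "(g^^m) (s 0) = (g^^n) y" unfolding cycle_of_def by blast
    have "s 0 = (g^^Suc n) (s (Suc n))"
      using backward_chain_funpow[OF assms(2), of "Suc n" 0] by simp
    then have "(g^^n) (g ((g^^m) (s (Suc n)))) = (g^^n) y"
      using meet
      by (simp add: funpow_add[symmetric, THEN fun_cong, simplified] add.commute funpow_swap1)
    then have "g ((g^^m) (s (Suc n))) = y" using inj_fn[OF assms(1)] by (simp add: inj_eq)
    then show "y \<in> range g" by blast
  qed
qed

lemma backward_chains_meet:
  assumes "inj g" "backward_chain g s" "backward_chain g s'" "s' 0 \<in> cycle_of g (s 0)"
  obtains i j where "s i = s' j"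
proof -
  obtain m n where meet: "(g^^m) (s 0) = (g^^n) (s' 0)"
    using assms(4) unfolding cycle_of_def by blast
  have "s 0 = (g^^n) (s n)" "s' 0 = (g^^m) (s' m)"
    using backward_chain_funpow[OF assms(2), of n 0] backward_chain_funpow[OF assms(3), of m 0]
    by simp_all
  with meet have "(g^^(m + n)) (s n) = (g^^(m + n)) (s' m)"
    by (metis add.commute comp_apply funpow_add)
  then show thesis using that inj_fn[OF assms(1)] by (simp add: inj_eq)
qed

section \<open>Open cycles under finite modification\<close>

definition linked :: "('a \<Rightarrow> 'a) \<Rightarrow> ('a \<Rightarrow> 'a) \<Rightarrow> 'a set \<Rightarrow> 'a set \<Rightarrow> bool" where
  "linked f g S T \<longleftrightarrow>
     (\<exists>t. backward_chain f t \<and> backward_chain g t \<and> t 0 \<in> S \<and> t 0 \<in> T)"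

text \<open>If f and g differ only at finitely many points, every open cycle of f is linked to an
  open cycle of g: a tail of an injective backward chain of f avoids those points.\<close>
lemma linked_open_cycle_exists:
  assumes "inj f" "inj g" "finite {x. f x \<noteq> g x}" "is_open_cycle f S"
  obtains T where "is_open_cycle g T" "linked f g S T"
proof -
  have cyc: "is_cycle f S" using assms(4) unfolding open_cycle_iff by blast
  then obtain x where "x \<in> S" unfolding is_cycle_def by blast
  then obtain s where s: "backward_chain f s" "s 0 = x" "inj s"
    using open_cycle_backward_chain[OF assms(1,4)] by blast
  have "finite (s -` {x. f x \<noteq> g x})" using finite_vimageI[OF assms(3) s(3)] .
  then obtain K where K: "s -` {x. f x \<noteq> g x} \<subseteq> {..<K}" using finite_nat_bounded by blast
  define t where "t k = s (k + K)" for k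
  have chain_f: "backward_chain f t" using s(1) by (simp add: backward_chain_def t_def)
  have agree: "f (t k) = g (t k)" for k
  proof -
    have "k + K \<notin> {..<K}" by simp
    then show ?thesis using K unfolding t_def by blast
  qed
  have chain_g: "backward_chain g t"
    using chain_f agree[symmetric] unfolding backward_chain_def by metis
  have "inj t"
  proof (rule injI)
    fix a b
    assume "t a = t b"
    then have "a + K = b + K" using s(3) by (simp add: t_def inj_eq)
    then show "a = b" by simp
  qed
  have "t 0 \<in> S"
    using backward_chain_in_cycle[OF s(1), of K] cycle_eq_cycle_of[OF cyc \<open>x \<in> S\<close>] s(2)
    by (simp add: t_def)
  then have "linked f g S (cycle_of g (t 0))"
    unfolding linked_def using chain_f chain_g cycle_of_self[of "t 0" g] by blast
  then show thesis
    using that backward_chain_open_cycle[OF assms(2) chain_g \<open>inj t\<close>] by blast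
qed

lemma linked_unique:
  assumes "inj g" "is_cycle f S" "is_cycle f S'" "is_cycle g T"
    and "linked f g S T" "linked f g S' T"
  shows "S = S'"
proof -
  obtain t where t: "backward_chain f t" "backward_chain g t" "t 0 \<in> S" "t 0 \<in> T"
    using assms(5) unfolding linked_def by blast
  obtain t' where t': "backward_chain f t'" "backward_chain g t'" "t' 0 \<in> S'" "t' 0 \<in> T"
    using assms(6) unfolding linked_def by blast
  have "t' 0 \<in> cycle_of g (t 0)" using cycle_eq_cycle_of[OF assms(4) t(4)] t'(4) by simp
  then obtain i j where meet: "t i = t' j"
    using backward_chains_meet[OF assms(1) t(2) t'(2)] by blast
  have "S = cycle_of f (t i)"
    using cycle_eq_cycle_of[OF assms(2) t(3)] cycle_of_eq[OF backward_chain_in_cycle[OF t(1), of i]]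
    by simp
  also have "\<dots> = S'"
    using cycle_eq_cycle_of[OF assms(3) t'(3)] meet
      cycle_of_eq[OF backward_chain_in_cycle[OF t'(1), of j]]
    by simp
  finally show ?thesis .
qed

lemma open_cycles_inject:
  assumes "inj f" "inj g" "finite {x. f x \<noteq> g x}"
  obtains \<Phi> where "inj_on \<Phi> {S. is_open_cycle f S}"
    "\<Phi> ` {S. is_open_cycle f S} \<subseteq> {T. is_open_cycle g T}"
proof -
  define \<Phi> where "\<Phi> S = (SOME T. is_open_cycle g T \<and> linked f g S T)" for S
  have \<Phi>: "is_open_cycle g (\<Phi> S) \<and> linked f g S (\<Phi> S)" if "is_open_cycle f S" for S
    unfolding \<Phi>_def by (rule someI_ex) (meson linked_open_cycle_exists[OF assms that])
  have "inj_on \<Phi> {S. is_open_cycle f S}"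
  proof (rule inj_onI)
    fix S S'
    assume S: "S \<in> {S. is_open_cycle f S}" and S': "S' \<in> {S. is_open_cycle f S}"
      and same: "\<Phi> S = \<Phi> S'"
    have "is_open_cycle g (\<Phi> S)" "linked f g S (\<Phi> S)" using \<Phi> S by simp_all
    moreover have "linked f g S' (\<Phi> S)" unfolding same using \<Phi> S' by simp
    ultimately show "S = S'"
      using linked_unique[OF assms(2)] S S' unfolding open_cycle_iff by blast
  qed
  then show thesis using that \<Phi> by blast
qed

lemma enat_card_eq:
  assumes "inj_on \<Phi> A" "\<Phi> ` A \<subseteq> B" "inj_on \<Psi> B" "\<Psi> ` B \<subseteq> A"
  shows "(if finite A then enat (card A) else \<infinity>) = (if finite B then enat (card B) else \<infinity>)"
proof -
  have "finite A \<longleftrightarrow> finite B"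
    using finite_imageD[OF finite_subset[OF assms(2)] assms(1)]
      finite_imageD[OF finite_subset[OF assms(4)] assms(3)] by blast
  then show ?thesis using card_bij_eq[OF assms] by simp
qed

theorem C_open_eq:
  assumes "inj f" "inj g" "finite {x. f x \<noteq> g x}"
  shows "C_open f = C_open g"
proof -
  have "{x. g x \<noteq> f x} = {x. f x \<noteq> g x}" by auto
  then have "finite {x. g x \<noteq> f x}" using assms(3) by simp
  obtain \<Phi> where "inj_on \<Phi> {S. is_open_cycle f S}"
    "\<Phi> ` {S. is_open_cycle f S} \<subseteq> {T. is_open_cycle g T}"
    using open_cycles_inject[OF assms] .
  moreover obtain \<Psi> where "inj_on \<Psi> {S. is_open_cycle g S}"
    "\<Psi> ` {S. is_open_cycle g S} \<subseteq> {T. is_open_cycle f T}"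
    using open_cycles_inject[OF assms(2,1) \<open>finite {x. g x \<noteq> f x}\<close>] .
  ultimately show ?thesis unfolding C_open_def by (rule enat_card_eq)
qed

text \<open>The main theorem: f \<circ> h differs from f only where h moves points, and h \<circ> f only on
  the f-preimage of those points; both sets are finite.\<close>
theorem mainTheorem7:
  fixes f h :: "'a::countable \<Rightarrow> 'a"
  assumes "infinite (UNIV :: 'a set)"
    and "inj f"
    and "finitary_perm h"
  shows "C_open f = C_open (f \<circ> h) \<and> C_open f = C_open (h \<circ> f)"
proof
  have "inj h" and moved: "finite {x. h x \<noteq> x}"
    using assms(3) bij_is_inj unfolding finitary_perm_def by auto
  have "{x. f x \<noteq> (f \<circ> h) x} \<subseteq> {x. h x \<noteq> x}" by auto
  then show "C_open f = C_open (f \<circ> h)"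
    using C_open_eq[OF assms(2) inj_compose[OF assms(2) \<open>inj h\<close>]] finite_subset[OF _ moved]
    by blast
  have "{x. f x \<noteq> (h \<circ> f) x} \<subseteq> f -` {x. h x \<noteq> x}" by auto
  then show "C_open f = C_open (h \<circ> f)"
    using C_open_eq[OF assms(2) inj_compose[OF \<open>inj h\<close> assms(2)]]
      finite_subset[OF _ finite_vimageI[OF moved assms(2)]] by blast
qed

end
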